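(* Fix a received sequence $\mathbf y=(y_1,\dots,y_n)$ and let $g^*$ be any minimizer of $\sum_{e\in\mathcal E} g(e)\,b(e)$ over $g\in\mathcal P_{\mathcal T}(H)$ (the output of the LP joint decoder). If $g^*$ is integral, i.e. $g^*\in\{0,1\}^{|\mathcal E|}$, then $g^*$ is the indicator vector of an edge-path $(e_1,\dots,e_n)$ whose input sequence $x_1^n=(x(e_1),\dots,x(e_n))$ is a codeword of $\mathcal C$, and the corresponding input/state pair $(x_1^n,s_1^{n+1})$, with $s_i=s(e_i)$ for $i\le n$ and $s_{n+1}=s'(e_n)$, maximizes $P(y_1^n,s_2^{n+1}\mid x_1^n,s_1)\,P(s_1)$ over all input/state sequence pairs $(x_1^n,s_1^{n+1})\in\{0,1\}^n\times\mathcal S^{n+1}$ with $x_1^n\in\mathcal C$ (i.e. $g^*$ is a joint maximum-likelihood edge-path).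
   Context: Let $\mathcal C\subseteq\{0,1\}^n$ be a binary linear code with parity-check matrix $H$, and let $\mathcal I$ be the collection of sets of column indices participating in each row (parity check) of $H$. For $I\in\mathcal I$ define the local codeword polytope $\mathrm{LCP}(I)=\bigcap_{S\subseteq I,\ |S|\text{ odd}}\{\mathbf f\in[0,1]^n:\sum_{i\in S}f_i-\sum_{i\in I\setminus S}f_i\le |S|-1\}$ and the relaxed polytope $\mathcal P(H)=\bigcap_{I\in\mathcal I}\mathrm{LCP}(I)$. A finite-state channel (FSC) with binary inputs $x\in\{0,1\}$, finite state set $\mathcal S$ and output alphabet $\mathcal Y$ is specified by transition probabilities (or densities in $y$) $P(y,s'\mid x,s)=\Pr(Y_i=y,S_{i+1}=s'\mid X_i=x,S_i=s)$, the same for all $i$, together with an initial state distribution $P(s_1)$; one writes $P(y_1^n,s_2^{n+1}\mid x_1^n,s_1)=\prod_{i=1}^nP(y_i,s_{i+1}\mid x_i,s_i)$. Trellis: given the received $\mathbf y$, the edge set $\mathcal E$ consists of the tuples $e=(i,s,s',x)$ with $i\in\{1,\dots,n\}$, $s,s'\in\mathcal S$, $x\in\{0,1\}$, such that $P(y_i,s'\mid x,s)>0$ (and additionally $P(s)>0$ if $i=1$); write $t(e)=i$, $s(e)=s$, $s'(e)=s'$, $x(e)=x$. The branch metric is $b(e)=-\ln P(y_{t(e)},s'(e)\mid x(e),s(e))$ if $t(e)>1$ and $b(e)=-\ln\big(P(y_1,s'(e)\mid x(e),s(e))P(s(e))\big)$ if $t(e)=1$. An edge-path is a sequence $(e_1,\dots,e_n)$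 of edges with $t(e_i)=i$ and $s'(e_i)=s(e_{i+1})$; it is identified with its indicator vector in $\{0,1\}^{|\mathcal E|}$. The trellis polytope $\mathcal T$ is the set of $g:\mathcal E\to[0,1]$ with $\sum_{e:\,t(e)=1}g(e)=1$ and, for every $i=1,\dots,n-1$ and $j\in\mathcal S$, $\sum_{e:\,t(e)=i,\,s'(e)=j}g(e)=\sum_{e:\,t(e)=i+1,\,s(e)=j}g(e)$. The projection $\mathcal Q$ maps $g$ to $\mathbf f=\mathcal Qg\in[0,1]^n$ with $f_i=\sum_{e:\,t(e)=i,\,x(e)=1}g(e)$. The trellis-wise relaxed polytope is $\mathcal P_{\mathcal T}(H)=\{g\in\mathcal T:\mathcal Qg\in\mathcal P(H)\}$. *)

theory Defs
  imports Complex_Main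
begin

text \<open>Binary parity-check matrix with m rows and n columns; columns indexed 1..n,
  rows indexed 0..m-1. Entry True means 1.\<close>

definition checks :: "(nat \<Rightarrow> nat \<Rightarrow> bool) \<Rightarrow> nat \<Rightarrow> nat \<Rightarrow> nat set set" where
  "checks H m n = (\<lambda>j. {i \<in> {1..n}. H j i}) ` {..<m}"

definition code :: "(nat \<Rightarrow> nat \<Rightarrow> bool) \<Rightarrow> nat \<Rightarrow> nat \<Rightarrow> (nat \<Rightarrow> bool) set" where
  "code H m n = {x. \<forall>I \<in> checks H m n. even (card {i \<in> I. x i})}"

definition LCP :: "nat \<Rightarrow> nat set \<Rightarrow> (nat \<Rightarrow> real) set" where
  "LCP n I = {f. (\<forall>i\<in>{1..n}. 0 \<le> f i \<and> f i \<le> 1) \<and>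
      (\<forall>S. S \<subseteq> I \<longrightarrow> odd (card S) \<longrightarrow>
          (\<Sum>i\<in>S. f i) - (\<Sum>i\<in>I - S. f i) \<le> real (card S) - 1)}"

definition relaxed_polytope :: "(nat \<Rightarrow> nat \<Rightarrow> bool) \<Rightarrow> nat \<Rightarrow> nat \<Rightarrow> (nat \<Rightarrow> real) set" where
  "relaxed_polytope H m n =
     {f. \<forall>i\<in>{1..n}. 0 \<le> f i \<and> f i \<le> 1} \<inter> (\<Inter>I \<in> checks H m n. LCP n I)"

text \<open>Trellis edges e = (i, s, s', x).\<close>
type_synonym 's edge = "nat \<times> 's \<times> 's \<times> bool"

definition etime :: "'s edge \<Rightarrow> nat" where "etime e = fst e"
definition estart :: "'s edge \<Rightarrow> 's" where "estart e = fst (snd e)"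
definition eend :: "'s edge \<Rightarrow> 's" where "eend e = fst (snd (snd e))"
definition einput :: "'s edge \<Rightarrow> bool" where "einput e = snd (snd (snd e))"

text \<open>Channel law: Pch y s' x s = P(y, s' | x, s); initial distribution P0.\<close>
definition trellis_edges ::
  "('y \<Rightarrow> 's \<Rightarrow> bool \<Rightarrow> 's \<Rightarrow> real) \<Rightarrow> ('s \<Rightarrow> real) \<Rightarrow> nat \<Rightarrow> (nat \<Rightarrow> 'y) \<Rightarrow> 's edge set" where
  "trellis_edges Pch P0 n y =
     {(i, s, s', x). i \<in> {1..n} \<and> Pch (y i) s' x s > 0 \<and> (i = 1 \<longrightarrow> P0 s > 0)}"

definition branch_metric ::
  "('y \<Rightarrow> 's \<Rightarrow> bool \<Rightarrow> 's \<Rightarrow> real) \<Rightarrow> ('s \<Rightarrow> real) \<Rightarrow> (nat \<Rightarrow> 'y) \<Rightarrow> 's edge \<Rightarrow> real" where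
  "branch_metric Pch P0 y e =
     (if etime e > 1 then - ln (Pch (y (etime e)) (eend e) (einput e) (estart e))
      else - ln (Pch (y (etime e)) (eend e) (einput e) (estart e) * P0 (estart e)))"

text \<open>Trellis polytope; g is a vector indexed by E, represented as a function
  vanishing outside E.\<close>
definition trellis_polytope :: "'s edge set \<Rightarrow> nat \<Rightarrow> ('s edge \<Rightarrow> real) set" where
  "trellis_polytope E n = {g.
     (\<forall>e. e \<notin> E \<longrightarrow> g e = 0) \<and>
     (\<forall>e\<in>E. 0 \<le> g e \<and> g e \<le> 1) \<and>
     (\<Sum>e\<in>{e\<in>E. etime e = 1}. g e) = 1 \<and>
     (\<forall>i\<in>{1..n-1}. \<forall>j.
        (\<Sum>e\<in>{e\<in>E. etime e = i \<and> eend e = j}. g e) =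
        (\<Sum>e\<in>{e\<in>E. etime e = i + 1 \<and> estart e = j}. g e))}"

definition projQ :: "'s edge set \<Rightarrow> ('s edge \<Rightarrow> real) \<Rightarrow> nat \<Rightarrow> real" where
  "projQ E g i = (\<Sum>e\<in>{e\<in>E. etime e = i \<and> einput e}. g e)"

definition trellis_relaxed_polytope ::
  "(nat \<Rightarrow> nat \<Rightarrow> bool) \<Rightarrow> nat \<Rightarrow> nat \<Rightarrow> 's edge set \<Rightarrow> ('s edge \<Rightarrow> real) set" where
  "trellis_relaxed_polytope H m n E =
     {g \<in> trellis_polytope E n. projQ E g \<in> relaxed_polytope H m n}"

definition is_edge_path :: "'s edge set \<Rightarrow> nat \<Rightarrow> (nat \<Rightarrow> 's edge) \<Rightarrow> bool" where
  "is_edge_path E n es \<longleftrightarrow>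
     (\<forall>i\<in>{1..n}. es i \<in> E \<and> etime (es i) = i) \<and>
     (\<forall>i\<in>{1..n-1}. eend (es i) = estart (es (i + 1)))"

definition joint_likelihood ::
  "('y \<Rightarrow> 's \<Rightarrow> bool \<Rightarrow> 's \<Rightarrow> real) \<Rightarrow> ('s \<Rightarrow> real) \<Rightarrow> nat \<Rightarrow> (nat \<Rightarrow> 'y)
    \<Rightarrow> (nat \<Rightarrow> bool) \<Rightarrow> (nat \<Rightarrow> 's) \<Rightarrow> real" where
  "joint_likelihood Pch P0 n y x ss =
     (\<Prod>i=1..n. Pch (y i) (ss (i + 1)) (x i) (ss i)) * P0 (ss 1)"

end

theory Submission imports Defs begin

(* The argument has three independent parts, developed in this order.
   (1) Codes: for a 0/1 vector f with support x, f lies in the relaxed polytope P(H)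
       iff x is a codeword (odd-set inequalities are exactly the parity conditions).
   (2) Trellis geometry: the indicator vector of an edge-path lies in the trellis
       polytope, its projection Q is the indicator of its input sequence, and its
       linear cost is the sum of the costs of its edges.  Conversely, flow conservation
       forces every layer of a point of the trellis polytope to carry total mass 1,
       so an integral point selects exactly one edge per layer, and conservation again
       makes consecutive selected edges connect: it is an edge-path indicator.
   (3) Likelihood: the edge-path of an input/state pair (x, s) exists iff the joint
       likelihood P(y, s_2^{n+1} | x, s_1) P(s_1) is positive, and then its cost is
       minus the logarithm of that likelihood.  Hence a minimum-cost edge-path among
       those with codeword inputs is a joint ML input/state pair. *)

lemma sum_indicator_card:
  assumes "finite S" and "\<forall>i\<in>S. f i = (if x i then 1 else (0::real))"
  shows "sum f S = real (card {i\<in>S. x i})"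
proof -
  have "sum f S = (\<Sum>i\<in>S. if x i then 1 else 0)"
    using assms(2) by (intro sum.cong) auto
  also have "\<dots> = real (card {i\<in>S. x i})"
    using assms(1) by (simp add: sum.If_cases Int_def conj_commute)
  finally show ?thesis .
qed

section \<open>Codewords and the relaxed polytope\<close>

lemma checks_subset: "I \<in> checks H m n \<Longrightarrow> I \<subseteq> {1..n}"
  by (auto simp: checks_def)

lemma indicator_in_relaxed_polytope_iff:
  assumes f: "\<forall>i\<in>{1..n}. f i = (if x i then 1 else 0)"
  shows "f \<in> relaxed_polytope H m n \<longleftrightarrow> x \<in> code H m n"
proof
  assume r: "f \<in> relaxed_polytope H m n"
  have "even (card {i\<in>I. x i})" if I: "I \<in> checks H m n" for I
  proof (rule ccontr)
    let ?S = "{i\<in>I. x i}"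
    assume "odd (card ?S)"
    moreover have "f \<in> LCP n I" using r I by (auto simp: relaxed_polytope_def)
    ultimately have ineq: "(\<Sum>i\<in>?S. f i) - (\<Sum>i\<in>I - ?S. f i) \<le> real (card ?S) - 1"
      by (auto simp: LCP_def)
    have "(\<Sum>i\<in>?S. f i) = (\<Sum>i\<in>?S. 1)"
      using f checks_subset[OF I] by (intro sum.cong) auto
    moreover have "(\<Sum>i\<in>I - ?S. f i) = 0"
      using f checks_subset[OF I] by (intro sum.neutral) (auto simp: subset_iff)
    ultimately show False using ineq by simp
  qed
  then show "x \<in> code H m n" by (auto simp: code_def)
next
  assume x: "x \<in> code H m n"
  have box: "\<forall>i\<in>{1..n}. 0 \<le> f i \<and> f i \<le> 1" using f by auto
  have "f \<in> LCP n I" if I: "I \<in> checks H m n" for I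
  proof -
    have Isub: "I \<subseteq> {1..n}" using checks_subset[OF I] .
    have finI: "finite I" using Isub finite_subset by blast
    have ev: "even (card {i\<in>I. x i})" using x I by (auto simp: code_def)
    have "(\<Sum>i\<in>S. f i) - (\<Sum>i\<in>I - S. f i) \<le> real (card S) - 1"
      if S: "S \<subseteq> I" "odd (card S)" for S
    proof -
      have finS: "finite S" using S finI finite_subset by blast
      have sS: "(\<Sum>i\<in>S. f i) = real (card {i\<in>S. x i})"
        using f S Isub finS by (intro sum_indicator_card) auto
      have sIS: "(\<Sum>i\<in>I-S. f i) = real (card {i\<in>I-S. x i})"
        using f Isub finI by (intro sum_indicator_card) auto
      show ?thesis
      proof (cases "S \<subseteq> {i\<in>I. x i}")
        case True
        text \<open>All of S are ones; by parity some one of the check lies outside S.\<close>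
        then have "{i\<in>S. x i} = S" by auto
        moreover have "{i\<in>I. x i} \<noteq> S" using ev S(2) by auto
        then obtain k where "k \<in> I - S" "x k" using True by blast
        then have "{i\<in>I-S. x i} \<noteq> {}" by blast
        then have "card {i\<in>I-S. x i} \<ge> 1"
          using finI by (simp add: Suc_leI card_gt_0_iff)
        ultimately show ?thesis using sS sIS by simp
      next
        case False
        then have "{i\<in>S. x i} \<subset> S" using S(1) by auto
        then have "card {i\<in>S. x i} < card S" using finS by (simp add: psubset_card_mono)
        then show ?thesis using sS sIS by simp
      qed
    qed
    then show ?thesis using box by (auto simp: LCP_def)
  qed
  then show "f \<in> relaxed_polytope H m n" using box by (auto simp: relaxed_polytope_def)
qed

lemma trellis_edges_iff:
  "e \<in> trellis_edges Pch P0 n y \<longleftrightarrow>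
     etime e \<in> {1..n} \<and> 0 < Pch (y (etime e)) (eend e) (einput e) (estart e) \<and>
     (etime e = 1 \<longrightarrow> 0 < P0 (estart e))"
  by (cases e) (auto simp: trellis_edges_def etime_def eend_def einput_def estart_def)

lemma finite_trellis_edges: "finite (trellis_edges Pch P0 n y :: ('s::finite) edge set)"
  by (rule finite_subset[of _ "{1..n} \<times> UNIV"]) (auto simp: trellis_edges_def)

section \<open>Indicator vectors of edge-paths\<close>

definition path_indicator :: "(nat \<Rightarrow> 's edge) \<Rightarrow> nat \<Rightarrow> 's edge \<Rightarrow> real" where
  "path_indicator es n e = (if e \<in> es ` {1..n} then 1 else 0)"

lemma path_indicator_layer_sum:
  assumes "finite E" and "is_edge_path E n es" and i: "i \<in> {1..n}"
  shows "(\<Sum>e\<in>{e\<in>E. etime e = i \<and> P e}. path_indicator es n e) = (if P (es i) then 1 else 0)"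
proof -
  have "{e\<in>E. etime e = i \<and> P e} \<inter> es ` {1..n} = (if P (es i) then {es i} else {})"
    using assms by (auto simp: is_edge_path_def)
  then show ?thesis
    using assms(1) by (simp add: path_indicator_def sum.If_cases)
qed

lemma path_indicator_cost:
  assumes fin: "finite E" and p: "is_edge_path E n es"
  shows "(\<Sum>e\<in>E. path_indicator es n e * h e) = (\<Sum>i=1..n. h (es i))"
proof -
  have on_path: "\<forall>i\<in>{1..n}. es i \<in> E \<and> etime (es i) = i"
    using p by (simp add: is_edge_path_def)
  have "(\<Sum>e\<in>E. path_indicator es n e * h e) = (\<Sum>e\<in>E. if e \<in> es ` {1..n} then h e else 0)"
    by (intro sum.cong) (auto simp: path_indicator_def)
  also have "\<dots> = (\<Sum>e\<in>E \<inter> es ` {1..n}. h e)"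
    using fin by (simp add: sum.inter_restrict)
  also have "E \<inter> es ` {1..n} = es ` {1..n}" using on_path by auto
  also have "inj_on es {1..n}"
    using on_path by (intro inj_onI) metis
  then have "(\<Sum>e\<in>es ` {1..n}. h e) = (\<Sum>i=1..n. h (es i))"
    by (simp add: sum.reindex)
  finally show ?thesis .
qed

lemma path_indicator_in_trellis_polytope:
  assumes "1 \<le> n" and fin: "finite E" and p: "is_edge_path E n es"
  shows "path_indicator es n \<in> trellis_polytope E n"
proof -
  have "(\<Sum>e\<in>{e\<in>E. etime e = 1}. path_indicator es n e) = 1"
    using path_indicator_layer_sum[OF fin p, of 1 "\<lambda>_. True"] assms(1) by simp
  moreover have "(\<Sum>e\<in>{e\<in>E. etime e = i \<and> eend e = j}. path_indicator es n e) =
        (\<Sum>e\<in>{e\<in>E. etime e = i + 1 \<and> estart e = j}. path_indicator es n e)"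
    if i: "i \<in> {1..n-1}" for i j
    using path_indicator_layer_sum[OF fin p, of i "\<lambda>e. eend e = j"]
      path_indicator_layer_sum[OF fin p, of "i+1" "\<lambda>e. estart e = j"] i p
    by (auto simp: is_edge_path_def)
  moreover have "\<forall>e. e \<notin> E \<longrightarrow> path_indicator es n e = 0"
    using p by (auto simp: is_edge_path_def path_indicator_def)
  ultimately show ?thesis
    by (auto simp: trellis_polytope_def path_indicator_def)
qed

lemma path_indicator_in_trellis_relaxed_polytope_iff:
  assumes "1 \<le> n" and fin: "finite E" and p: "is_edge_path E n es"
  shows "path_indicator es n \<in> trellis_relaxed_polytope H m n E \<longleftrightarrow>
         (\<lambda>i. einput (es i)) \<in> code H m n"
proof -
  have "\<forall>i\<in>{1..n}. projQ E (path_indicator es n) i = (if einput (es i) then 1 else 0)"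
    using path_indicator_layer_sum[OF fin p, of _ einput] by (simp add: projQ_def)
  then show ?thesis
    using path_indicator_in_trellis_polytope[OF assms] indicator_in_relaxed_polytope_iff
    by (simp add: trellis_relaxed_polytope_def)
qed

section \<open>Integral points of the trellis polytope\<close>

text \<open>Flow conservation: every layer of a point of the trellis polytope has total mass 1.
  The mass of layer i+1 is regrouped by starting state, which by conservation is the
  mass of layer i regrouped by ending state.\<close>
lemma trellis_polytope_layer_sum:
  assumes fin: "finite E" and g: "g \<in> trellis_polytope E n" and i: "i \<in> {1..n}"
  shows "(\<Sum>e\<in>{e\<in>E. etime e = i}. g e) = 1"
proof -
  define T where "T = estart ` E \<union> eend ` E"
  have finT: "finite T" using fin by (simp add: T_def)
  have by_state: "(\<Sum>e\<in>{e\<in>E. etime e = k}. g e) =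
      (\<Sum>j\<in>T. \<Sum>e\<in>{e\<in>E. etime e = k \<and> st e = j}. g e)"
    if "st = estart \<or> st = eend" for k st
  proof -
    have "st ` {e\<in>E. etime e = k} \<subseteq> T" using that by (auto simp: T_def)
    from sum.group[OF _ finT this, of g] fin show ?thesis
      by (simp add: conj_assoc)
  qed
  have "1 \<le> i" "i \<le> n" using i by auto
  then show ?thesis
  proof (induction i rule: nat_induct_at_least)
    case base
    then show ?case using g by (simp add: trellis_polytope_def)
  next
    case (Suc i)
    have "i \<in> {1..n-1}" using Suc by auto
    then have "(\<Sum>e\<in>{e\<in>E. etime e = Suc i}. g e) = (\<Sum>e\<in>{e\<in>E. etime e = i}. g e)"
      using g by_state[of estart "Suc i"] by_state[of eend i]
      by (simp add: trellis_polytope_def)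
    then show ?case using Suc by simp
  qed
qed

lemma trellis_polytope_horizon_pos:
  assumes times: "\<forall>e\<in>E. etime e \<in> {1..n}" and g: "g \<in> trellis_polytope E n"
  shows "1 \<le> n"
proof (rule ccontr)
  assume "\<not> 1 \<le> n"
  then have "{e\<in>E. etime e = 1} = {}" using times by auto
  then show False using g by (simp add: trellis_polytope_def del: Collect_empty_eq)
qed

lemma integral_trellis_point_is_path:
  assumes fin: "finite E" and times: "\<forall>e\<in>E. etime e \<in> {1..n}"
    and g: "g \<in> trellis_polytope E n" and integral: "\<forall>e\<in>E. g e \<in> {0, 1}"
  shows "\<exists>es. is_edge_path E n es \<and> g = path_indicator es n"
proof -
  have zero: "\<And>e. e \<notin> E \<Longrightarrow> g e = 0" and nonneg: "\<And>e. 0 \<le> g e"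
    using g by (auto simp: trellis_polytope_def)
  have cons: "\<And>i j. i \<in> {1..n-1} \<Longrightarrow> (\<Sum>e\<in>{e\<in>E. etime e = i \<and> eend e = j}. g e) =
        (\<Sum>e\<in>{e\<in>E. etime e = i + 1 \<and> estart e = j}. g e)"
    using g by (simp add: trellis_polytope_def)
  have one_edge: "card {e\<in>E. etime e = i \<and> g e = 1} = 1" if i: "i \<in> {1..n}" for i
  proof -
    have "(\<Sum>e\<in>{e\<in>E. etime e = i}. g e) = real (card {e\<in>{e\<in>E. etime e = i}. g e = 1})"
      using fin integral by (intro sum_indicator_card) auto
    moreover have "{e\<in>{e\<in>E. etime e = i}. g e = 1} = {e\<in>E. etime e = i \<and> g e = 1}"
      by auto
    ultimately show ?thesis
      using trellis_polytope_layer_sum[OF fin g i] by simp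
  qed
  define es where "es i = the_elem {e\<in>E. etime e = i \<and> g e = 1}" for i
  have layer: "{e\<in>E. etime e = i \<and> g e = 1} = {es i}" if i: "i \<in> {1..n}" for i
  proof -
    obtain a where "{e\<in>E. etime e = i \<and> g e = 1} = {a}"
      using one_edge[OF i] card_1_singletonE by blast
    then show ?thesis by (simp add: es_def)
  qed
  have es_on: "es i \<in> E \<and> etime (es i) = i \<and> g (es i) = 1" if "i \<in> {1..n}" for i
    using layer[OF that] by blast
  text \<open>The unit of flow leaving the i-th selected edge must enter the (i+1)-th.\<close>
  have connect: "eend (es i) = estart (es (i + 1))" if i: "i \<in> {1..n-1}" for i
  proof -
    let ?A = "{e\<in>E. etime e = i + 1 \<and> estart e = eend (es i)}"
    let ?B = "{e\<in>E. etime e = i \<and> eend e = eend (es i)}"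
    have on_i: "es i \<in> ?B" "g (es i) = 1" using es_on[of i] i by auto
    have "g (es i) \<le> sum g ?B"
      using fin nonneg by (intro member_le_sum[OF on_i(1)]) auto
    then have "sum g ?A \<noteq> 0" using cons[OF i] on_i(2) by simp
    then obtain e where e: "e \<in> ?A" "g e \<noteq> 0" by (rule sum.not_neutral_contains_not_neutral)
    then have "e \<in> {e\<in>E. etime e = i + 1 \<and> g e = 1}" using integral by auto
    moreover have "i + 1 \<in> {1..n}" using i by auto
    ultimately have "e = es (i + 1)" using layer by blast
    then show ?thesis using e by simp
  qed
  have path: "is_edge_path E n es" using es_on connect by (simp add: is_edge_path_def)
  have "g e = path_indicator es n e" for e
  proof (cases "e \<in> E \<and> g e = 1")
    case True
    then have "etime e \<in> {1..n}" using times by blast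
    moreover from this have "e = es (etime e)" using layer True by blast
    ultimately show ?thesis using True by (auto simp: path_indicator_def)
  next
    case False
    then have "g e = 0" using integral zero by blast
    moreover have "e \<notin> es ` {1..n}" using es_on False by auto
    ultimately show ?thesis by (simp add: path_indicator_def)
  qed
  then show ?thesis using path by blast
qed

section \<open>Edge-paths and joint likelihood\<close>

definition edge_seq :: "(nat \<Rightarrow> bool) \<Rightarrow> (nat \<Rightarrow> 's) \<Rightarrow> nat \<Rightarrow> 's edge" where
  "edge_seq x ss i = (i, ss i, ss (i + 1), x i)"

lemma edge_seq_sel [simp]:
  "etime (edge_seq x ss i) = i" "estart (edge_seq x ss i) = ss i"
  "eend (edge_seq x ss i) = ss (i + 1)" "einput (edge_seq x ss i) = x i"
  by (simp_all add: edge_seq_def etime_def estart_def eend_def einput_def)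

definition path_states :: "(nat \<Rightarrow> 's edge) \<Rightarrow> nat \<Rightarrow> nat \<Rightarrow> 's" where
  "path_states es n i = (if i \<le> n then estart (es i) else eend (es n))"

lemma path_eq_edge_seq:
  assumes p: "is_edge_path E n es" and i: "i \<in> {1..n}"
  shows "es i = edge_seq (\<lambda>i. einput (es i)) (path_states es n) i"
proof -
  have "etime (es i) = i" using p i by (simp add: is_edge_path_def)
  moreover have "eend (es i) = path_states es n (i + 1)"
  proof (cases "i < n")
    case True
    then show ?thesis using p i by (auto simp: is_edge_path_def path_states_def)
  next
    case False
    then show ?thesis using i by (simp add: path_states_def)
  qed
  ultimately show ?thesis using i
    by (cases "es i") (simp add: edge_seq_def path_states_def etime_def estart_def eend_def einput_def)
qed

lemma edge_seq_path_iff: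
  assumes Pch_nonneg: "\<And>y' s' x s. 0 \<le> Pch y' s' x s" and P0_nonneg: "\<And>s. 0 \<le> P0 s"
    and n: "1 \<le> n"
  shows "is_edge_path (trellis_edges Pch P0 n y) n (edge_seq x ss) \<longleftrightarrow>
         0 < joint_likelihood Pch P0 n y x ss"
proof -
  let ?p = "\<lambda>i. Pch (y i) (ss (i + 1)) (x i) (ss i)"
  have "is_edge_path (trellis_edges Pch P0 n y) n (edge_seq x ss) \<longleftrightarrow>
        (\<forall>i\<in>{1..n}. 0 < ?p i) \<and> 0 < P0 (ss 1)"
    using n by (auto simp: is_edge_path_def trellis_edges_iff)
  also have "(\<forall>i\<in>{1..n}. 0 < ?p i) \<longleftrightarrow> 0 < prod ?p {1..n}"
  proof
    assume prod_pos: "0 < prod ?p {1..n}"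
    have "?p i \<noteq> 0" if "i \<in> {1..n}" for i
    proof
      assume "?p i = 0"
      then have "prod ?p {1..n} = 0" using that by (intro prod_zero) auto
      then show False using prod_pos by linarith
    qed
    then show "\<forall>i\<in>{1..n}. 0 < ?p i" using Pch_nonneg by (simp add: order_less_le)
  qed (rule prod_pos, simp)
  also have "(0 < prod ?p {1..n} \<and> 0 < P0 (ss 1)) \<longleftrightarrow> 0 < joint_likelihood Pch P0 n y x ss"
    using P0_nonneg[of "ss 1"] prod_nonneg[of "{1..n}" ?p] Pch_nonneg
    by (auto simp: joint_likelihood_def zero_less_mult_iff)
  finally show ?thesis .
qed

lemma edge_seq_cost:
  assumes n: "1 \<le> n" and p: "is_edge_path (trellis_edges Pch P0 n y) n (edge_seq x ss)"
  shows "(\<Sum>i=1..n. branch_metric Pch P0 y (edge_seq x ss i)) =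
         - ln (joint_likelihood Pch P0 n y x ss)"
proof -
  let ?p = "\<lambda>i. Pch (y i) (ss (i + 1)) (x i) (ss i)"
  have pos: "0 < ?p i" if "i \<in> {1..n}" for i
    using p that by (auto simp: is_edge_path_def trellis_edges_iff)
  have P0_pos: "0 < P0 (ss 1)"
    using p n by (auto simp: is_edge_path_def trellis_edges_iff)
  have "branch_metric Pch P0 y (edge_seq x ss i) =
        - ln (?p i) - (if i = 1 then ln (P0 (ss 1)) else 0)" if "i \<in> {1..n}" for i
    using that pos[OF that] P0_pos by (auto simp: branch_metric_def ln_mult)
  then have "(\<Sum>i=1..n. branch_metric Pch P0 y (edge_seq x ss i)) =
        - (\<Sum>i=1..n. ln (?p i)) - ln (P0 (ss 1))"
    using n by (simp add: sum_subtractf sum_negf)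
  also have "(\<Sum>i=1..n. ln (?p i)) = ln (prod ?p {1..n})"
    by (rule ln_prod[symmetric]) (use pos in force)+
  also have "- ln (prod ?p {1..n}) - ln (P0 (ss 1)) = - ln (prod ?p {1..n} * P0 (ss 1))"
    using ln_mult_pos[OF prod_pos[of "{1..n}" ?p] P0_pos] pos by simp
  also have "prod ?p {1..n} * P0 (ss 1) = joint_likelihood Pch P0 n y x ss"
    by (simp add: joint_likelihood_def)
  finally show ?thesis .
qed

text \<open>Pairs of likelihood 0 are trivially dominated; a pair of positive likelihood traverses
  an edge-path whose cost is minus its log-likelihood, and ln is monotone.\<close>
lemma min_cost_path_is_joint_ml:
  assumes Pch_nonneg: "\<And>y' s' x s. 0 \<le> Pch y' s' x s" and P0_nonneg: "\<And>s. 0 \<le> P0 s"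
    and n: "1 \<le> n" and p: "is_edge_path (trellis_edges Pch P0 n y) n es"
    and min: "\<And>es'. is_edge_path (trellis_edges Pch P0 n y) n es' \<Longrightarrow>
        (\<lambda>i. einput (es' i)) \<in> code H m n \<Longrightarrow>
        (\<Sum>i=1..n. branch_metric Pch P0 y (es i)) \<le> (\<Sum>i=1..n. branch_metric Pch P0 y (es' i))"
    and x': "x' \<in> code H m n"
  shows "joint_likelihood Pch P0 n y x' ss' \<le>
         joint_likelihood Pch P0 n y (\<lambda>i. einput (es i)) (path_states es n)"
proof -
  let ?x = "\<lambda>i. einput (es i)" and ?ss = "path_states es n"
  let ?cost = "\<lambda>es. \<Sum>i=1..n. branch_metric Pch P0 y (es i)"
  have agree: "\<forall>i\<in>{1..n}. es i = edge_seq ?x ?ss i"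
    using path_eq_edge_seq[OF p] by blast
  then have p_seq: "is_edge_path (trellis_edges Pch P0 n y) n (edge_seq ?x ?ss)"
    using p by (simp add: is_edge_path_def)
  have L_pos: "0 < joint_likelihood Pch P0 n y ?x ?ss"
    using edge_seq_path_iff[of Pch P0, OF Pch_nonneg P0_nonneg n] p_seq by blast
  have "?cost es = ?cost (edge_seq ?x ?ss)"
    using agree by (intro sum.cong refl arg_cong[where f = "branch_metric Pch P0 y"]) blast
  then have cost: "?cost es = - ln (joint_likelihood Pch P0 n y ?x ?ss)"
    using edge_seq_cost[OF n p_seq] by simp
  show ?thesis
  proof (cases "0 < joint_likelihood Pch P0 n y x' ss'")
    case False
    then show ?thesis using L_pos by simp
  next
    case True
    then have p': "is_edge_path (trellis_edges Pch P0 n y) n (edge_seq x' ss')"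
      using edge_seq_path_iff[of Pch P0, OF Pch_nonneg P0_nonneg n] by blast
    have "- ln (joint_likelihood Pch P0 n y ?x ?ss) \<le> - ln (joint_likelihood Pch P0 n y x' ss')"
      using min[OF p'] x' cost edge_seq_cost[OF n p'] by simp
    then show ?thesis using True L_pos by simp
  qed
qed

theorem theorem3:
  fixes H :: "nat \<Rightarrow> nat \<Rightarrow> bool" and m n :: nat
    and Pch :: "'y \<Rightarrow> 's::finite \<Rightarrow> bool \<Rightarrow> 's \<Rightarrow> real"
    and P0 :: "'s \<Rightarrow> real"
    and y :: "nat \<Rightarrow> 'y"
    and gstar :: "'s edge \<Rightarrow> real"
  defines "E \<equiv> trellis_edges Pch P0 n y"
  assumes Pch_nonneg: "\<And>y' s' x s. 0 \<le> Pch y' s' x s"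
    and P0_nonneg: "\<And>s. 0 \<le> P0 s"
    and P0_sum: "(\<Sum>s\<in>UNIV. P0 s) = 1"
    and opt: "gstar \<in> trellis_relaxed_polytope H m n E"
    and minim: "\<And>g. g \<in> trellis_relaxed_polytope H m n E \<Longrightarrow>
        (\<Sum>e\<in>E. gstar e * branch_metric Pch P0 y e) \<le> (\<Sum>e\<in>E. g e * branch_metric Pch P0 y e)"
    and integral: "\<And>e. e \<in> E \<Longrightarrow> gstar e \<in> {0, 1}"
  shows "\<exists>es. is_edge_path E n es \<and>
           (\<forall>e. gstar e = (if e \<in> es ` {1..n} then 1 else 0)) \<and>
           (\<lambda>i. einput (es i)) \<in> code H m n \<and>
           (let xs = (\<lambda>i. einput (es i));
                ss = (\<lambda>i. if i \<le> n then estart (es i) else eend (es n))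
            in \<forall>x' ss'. x' \<in> code H m n \<longrightarrow>
                 joint_likelihood Pch P0 n y x' ss' \<le> joint_likelihood Pch P0 n y xs ss)"
proof -
  have fin: "finite E" unfolding E_def by (rule finite_trellis_edges)
  have times: "\<forall>e\<in>E. etime e \<in> {1..n}" by (simp add: E_def trellis_edges_iff)
  have tp: "gstar \<in> trellis_polytope E n" using opt by (simp add: trellis_relaxed_polytope_def)
  have n: "1 \<le> n" using trellis_polytope_horizon_pos[OF times tp] .
  obtain es where p: "is_edge_path E n es" and g: "gstar = path_indicator es n"
    using integral_trellis_point_is_path[OF fin times tp] integral by auto
  have code: "(\<lambda>i. einput (es i)) \<in> code H m n"
    using opt g path_indicator_in_trellis_relaxed_polytope_iff[OF n fin p] by simp
  have "(\<Sum>i=1..n. branch_metric Pch P0 y (es i)) \<le> (\<Sum>i=1..n. branch_metric Pch P0 y (es' i))"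
    if p': "is_edge_path E n es'" and "(\<lambda>i. einput (es' i)) \<in> code H m n" for es'
    using minim[of "path_indicator es' n"] that g
      path_indicator_in_trellis_relaxed_polytope_iff[OF n fin p']
      path_indicator_cost[OF fin p] path_indicator_cost[OF fin p'] by simp
  then have ml: "joint_likelihood Pch P0 n y x' ss' \<le>
      joint_likelihood Pch P0 n y (\<lambda>i. einput (es i)) (path_states es n)"
    if "x' \<in> code H m n" for x' ss'
    using min_cost_path_is_joint_ml[of Pch P0, OF Pch_nonneg P0_nonneg n p[unfolded E_def]] that
    unfolding E_def by blast
  have "path_states es n = (\<lambda>i. if i \<le> n then estart (es i) else eend (es n))"
    by (simp add: path_states_def fun_eq_iff)
  then have "\<forall>x' ss'. x' \<in> code H m n \<longrightarrow> joint_likelihood Pch P0 n y x' ss' \<le>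
      joint_likelihood Pch P0 n y (\<lambda>i. einput (es i)) (\<lambda>i. if i \<le> n then estart (es i) else eend (es n))"
    using ml by simp
  moreover have "\<forall>e. gstar e = (if e \<in> es ` {1..n} then 1 else 0)"
    using g by (simp add: path_indicator_def)
  ultimately show ?thesis
    using p code unfolding Let_def by blast
qed

end
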